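(* Let $f_0$ be a piecewise expanding unimodal map whose critical point $c$ is not periodic. Then: (A) For every $\eta>0$ there exists a neighborhood $W$ of $f_0$ in $\mathcal U^1$ (for the norm $|\cdot|_1$) such that $|J(f,v)-J(f_0,v)|\le\eta|v|_1$ for every $v\in\mathcal B^1(I)$ and every $f\in W$. (B) For every $v_0\in\mathcal B^0(I)$, the function $f\mapsto J(f,v_0)$ on $\mathcal U^1$ is continuous at $f=f_0$ with respect to the norm $|\cdot|_1$.
   Context: Let $I=[-1,1]$ and $c=0$. For $k\ge0$, $\mathcal B^k(I)$ is the Banach space of continuous $f:I\to\mathbb R$ that are $C^k$ on $[-1,0]$ and on $[0,1]$ with $f(1)=f(-1)$, normed by $|f|_k=\max\{|f|_{C^k[-1,0]},|f|_{C^k[0,1]}\}$, $|f|_{C^k(Q)}=\max_{0\le i\le k}\sup_Q|D^if|$. $\mathcal U^1$ is the set of piecewise expanding unimodal maps: $f\in\mathcal B^1(I)$ with $f(-1)=f(1)=-1$, $\inf_{x\in[-1,0]}Df(x)>1$, $\sup_{x\in[0,1]}Df(x)<-1$ and $f(0)\le1$. For bounded $v:I\to\mathbb R$: if $c$ is not periodic for $f$, $J(f,v)=\sum_{i=0}^\infty \frac{v(f^i(c))}{Df^i(f(c))}$; if $c$ has prime period $p$, $J(f,v)=\sum_{i=0}^{p-1}\frac{v(f^i(c))}{Df^i(f(c))}$. *)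

theory Defs
  imports "HOL-Analysis.Analysis"
begin

text \<open>The interval I = [-1,1], critical point c = 0. Functions are real => real;
only their values on I matter.\<close>

definition C1_on :: "real set \<Rightarrow> (real \<Rightarrow> real) \<Rightarrow> bool" where
  "C1_on S f \<longleftrightarrow> (\<exists>g. continuous_on S g \<and> (\<forall>x\<in>S. (f has_real_derivative g x) (at x within S)))"

definition Dm :: "(real \<Rightarrow> real) \<Rightarrow> real \<Rightarrow> real" where
  "Dm f x = (THE d. (f has_real_derivative d) (at x within {-1..0}))"

definition Dp :: "(real \<Rightarrow> real) \<Rightarrow> real \<Rightarrow> real" where
  "Dp f x = (THE d. (f has_real_derivative d) (at x within {0..1}))"

text \<open>Piecewise derivative Df (the convention at x = 0 is never used below).\<close>
definition Dpw :: "(real \<Rightarrow> real) \<Rightarrow> real \<Rightarrow> real" where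
  "Dpw f x = (if x \<le> 0 then Dm f x else Dp f x)"

definition B0 :: "(real \<Rightarrow> real) set" where
  "B0 = {f. continuous_on {-1..1} f \<and> f 1 = f (-1)}"

definition B1 :: "(real \<Rightarrow> real) set" where
  "B1 = {f. f \<in> B0 \<and> C1_on {-1..0} f \<and> C1_on {0..1} f}"

definition norm0 :: "(real \<Rightarrow> real) \<Rightarrow> real" where
  "norm0 f = Sup ((\<lambda>x. \<bar>f x\<bar>) ` {-1..1})"

definition norm1 :: "(real \<Rightarrow> real) \<Rightarrow> real" where
  "norm1 f = max (norm0 f)
      (max (Sup ((\<lambda>x. \<bar>Dm f x\<bar>) ` {-1..0})) (Sup ((\<lambda>x. \<bar>Dp f x\<bar>) ` {0..1})))"

definition U1 :: "(real \<Rightarrow> real) set" where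
  "U1 = {f. f \<in> B1 \<and> f (-1) = -1 \<and> f 1 = -1
           \<and> Inf (Dm f ` {-1..0}) > 1 \<and> Sup (Dp f ` {0..1}) < -1 \<and> f 0 \<le> 1}"

text \<open>Derivative of the i-th iterate along the orbit of x (chain rule).\<close>
definition Diter :: "(real \<Rightarrow> real) \<Rightarrow> nat \<Rightarrow> real \<Rightarrow> real" where
  "Diter f i x = (\<Prod>j<i. Dpw f ((f ^^ j) x))"

definition periodic_c :: "(real \<Rightarrow> real) \<Rightarrow> bool" where
  "periodic_c f \<longleftrightarrow> (\<exists>n>0. (f ^^ n) 0 = 0)"

definition J :: "(real \<Rightarrow> real) \<Rightarrow> (real \<Rightarrow> real) \<Rightarrow> real" where
  "J f v = (if periodic_c f
            then (let p = (LEAST n. n > 0 \<and> (f ^^ n) 0 = 0)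
                  in \<Sum>i<p. v ((f ^^ i) 0) / Diter f i (f 0))
            else (\<Sum>i. v ((f ^^ i) 0) / Diter f i (f 0)))"

end

theory Submission imports Defs begin

text \<open>The terms \<open>v(f\<^sup>i c) / Df\<^sup>i(f c)\<close> of \<open>J(f,v)\<close> decay geometrically with a rate that is
uniform on a \<open>|\<cdot>|\<^sub>1\<close>-neighbourhood of \<open>f\<^sub>0\<close>, because the expansion constant of \<open>f\<^sub>0\<close> persists
under \<open>C\<^sup>1\<close>-small perturbations. So \<open>J(f,v)\<close> is uniformly approximated by a partial sum of fixed
length \<open>K\<close>; for nearby \<open>f\<close> the critical point cannot return before time \<open>K\<close>, so this holds
even when \<open>c\<close> is periodic for \<open>f\<close>. Since the orbit of \<open>f\<^sub>0\<close> never hits \<open>c\<close>, where \<open>Df\<close> jumps,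
the first \<open>K\<close> orbit points and derivatives depend continuously on \<open>f\<close>, which gives (B); for (A)
the differences of the first \<open>K\<close> terms are controlled by the Lipschitz constant \<open>|v|\<^sub>1\<close>.\<close>

definition Icc_deriv :: "real \<Rightarrow> real \<Rightarrow> (real \<Rightarrow> real) \<Rightarrow> real \<Rightarrow> real" where
  "Icc_deriv a b f x = (THE d. (f has_real_derivative d) (at x within {a..b}))"

lemma Dm_eq_Icc_deriv: "Dm f = Icc_deriv (-1) 0 f"
  by (simp add: fun_eq_iff Dm_def Icc_deriv_def)

lemma Dp_eq_Icc_deriv: "Dp f = Icc_deriv 0 1 f"
  by (simp add: fun_eq_iff Dp_def Icc_deriv_def)

lemma Icc_deriv_eqI:
  assumes "(f has_real_derivative d) (at x within {a..b})" "a < b" "x \<in> {a..b}"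
  shows "Icc_deriv a b f x = d"
  unfolding Icc_deriv_def
proof (rule the_equality)
  show "(f has_real_derivative d) (at x within {a..b})" by fact
  have "at x within {a..b} \<noteq> bot"
    using assms(2,3) by (simp add: trivial_limit_within islimpt_Icc)
  then show "d' = d" if "(f has_real_derivative d') (at x within {a..b})" for d'
    using has_field_derivative_unique that assms(1) by blast
qed

lemma has_real_derivative_Icc_deriv:
  assumes "C1_on {a..b} f" "a < b" "x \<in> {a..b}"
  shows "(f has_real_derivative Icc_deriv a b f x) (at x within {a..b})"
  using assms Icc_deriv_eqI unfolding C1_on_def by metis

lemma continuous_on_Icc_deriv:
  assumes "C1_on {a..b} f" "a < b"
  shows "continuous_on {a..b} (Icc_deriv a b f)"
proof -
  obtain g where g: "continuous_on {a..b} g"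
    and dg: "\<forall>x\<in>{a..b}. (f has_real_derivative g x) (at x within {a..b})"
    using assms(1) unfolding C1_on_def by blast
  show ?thesis
    using continuous_on_eq[OF g] Icc_deriv_eqI[OF _ assms(2)] dg by metis
qed

lemma C1_on_diff: "C1_on S f \<Longrightarrow> C1_on S g \<Longrightarrow> C1_on S (\<lambda>x. f x - g x)"
  unfolding C1_on_def by (fastforce intro!: continuous_on_diff DERIV_diff)

lemma Icc_deriv_diff:
  assumes "C1_on {a..b} f" "C1_on {a..b} g" "a < b" "x \<in> {a..b}"
  shows "Icc_deriv a b (\<lambda>x. f x - g x) x = Icc_deriv a b f x - Icc_deriv a b g x"
  using assms by (intro Icc_deriv_eqI DERIV_diff has_real_derivative_Icc_deriv)

lemma abs_le_Sup_abs_image: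
  fixes g :: "'a::topological_space \<Rightarrow> real"
  assumes "continuous_on S g" "compact S" "x \<in> S"
  shows "\<bar>g x\<bar> \<le> Sup ((\<lambda>x. \<bar>g x\<bar>) ` S)"
  using assms by (intro cSup_upper imageI bounded_imp_bdd_above compact_imp_bounded
      compact_continuous_image continuous_on_rabs)

section \<open>The spaces \<open>\<B>\<^sup>0\<close> and \<open>\<B>\<^sup>1\<close>\<close>

lemma has_real_derivative_Dm: "f \<in> B1 \<Longrightarrow> x \<in> {-1..0} \<Longrightarrow> (f has_real_derivative Dm f x) (at x within {-1..0})"
  unfolding B1_def Dm_eq_Icc_deriv by (simp add: has_real_derivative_Icc_deriv)

lemma has_real_derivative_Dp: "f \<in> B1 \<Longrightarrow> x \<in> {0..1} \<Longrightarrow> (f has_real_derivative Dp f x) (at x within {0..1})"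
  unfolding B1_def Dp_eq_Icc_deriv by (simp add: has_real_derivative_Icc_deriv)

lemma continuous_on_Dm: "f \<in> B1 \<Longrightarrow> continuous_on {-1..0} (Dm f)"
  unfolding B1_def Dm_eq_Icc_deriv by (simp add: continuous_on_Icc_deriv)

lemma continuous_on_Dp: "f \<in> B1 \<Longrightarrow> continuous_on {0..1} (Dp f)"
  unfolding B1_def Dp_eq_Icc_deriv by (simp add: continuous_on_Icc_deriv)

lemma B1_diff: "f \<in> B1 \<Longrightarrow> g \<in> B1 \<Longrightarrow> (\<lambda>x. f x - g x) \<in> B1"
  unfolding B1_def B0_def by (auto intro!: continuous_on_diff C1_on_diff)

lemma Dm_diff: "f \<in> B1 \<Longrightarrow> g \<in> B1 \<Longrightarrow> x \<in> {-1..0} \<Longrightarrow> Dm (\<lambda>x. f x - g x) x = Dm f x - Dm g x"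
  unfolding B1_def Dm_eq_Icc_deriv by (simp add: Icc_deriv_diff)

lemma Dp_diff: "f \<in> B1 \<Longrightarrow> g \<in> B1 \<Longrightarrow> x \<in> {0..1} \<Longrightarrow> Dp (\<lambda>x. f x - g x) x = Dp f x - Dp g x"
  unfolding B1_def Dp_eq_Icc_deriv by (simp add: Icc_deriv_diff)

lemma abs_le_norm0: "h \<in> B0 \<Longrightarrow> x \<in> {-1..1} \<Longrightarrow> \<bar>h x\<bar> \<le> norm0 h"
  unfolding norm0_def B0_def by (simp add: abs_le_Sup_abs_image)

lemma abs_le_norm1: "h \<in> B1 \<Longrightarrow> x \<in> {-1..1} \<Longrightarrow> \<bar>h x\<bar> \<le> norm1 h"
  using abs_le_norm0[of h x] unfolding norm1_def B1_def by auto

lemma norm1_nonneg: "h \<in> B1 \<Longrightarrow> 0 \<le> norm1 h"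
  using abs_le_norm1[of h 0] by auto

lemma abs_Dm_le_norm1: "h \<in> B1 \<Longrightarrow> x \<in> {-1..0} \<Longrightarrow> \<bar>Dm h x\<bar> \<le> norm1 h"
  using abs_le_Sup_abs_image[OF continuous_on_Dm] unfolding norm1_def by fastforce

lemma abs_Dp_le_norm1: "h \<in> B1 \<Longrightarrow> x \<in> {0..1} \<Longrightarrow> \<bar>Dp h x\<bar> \<le> norm1 h"
  using abs_le_Sup_abs_image[OF continuous_on_Dp] unfolding norm1_def by fastforce

lemma abs_Dm_diff_le_norm1:
  assumes "f \<in> B1" "g \<in> B1" "x \<in> {-1..0}"
  shows "\<bar>Dm f x - Dm g x\<bar> \<le> norm1 (\<lambda>x. f x - g x)"
  using abs_Dm_le_norm1[OF B1_diff[OF assms(1,2)] assms(3)] by (simp only: Dm_diff[OF assms])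

lemma abs_Dp_diff_le_norm1:
  assumes "f \<in> B1" "g \<in> B1" "x \<in> {0..1}"
  shows "\<bar>Dp f x - Dp g x\<bar> \<le> norm1 (\<lambda>x. f x - g x)"
  using abs_Dp_le_norm1[OF B1_diff[OF assms(1,2)] assms(3)] by (simp only: Dp_diff[OF assms])

lemma abs_Dpw_diff_le_norm1:
  assumes "f \<in> B1" "g \<in> B1" "x \<in> {-1..1}"
  shows "\<bar>Dpw f x - Dpw g x\<bar> \<le> norm1 (\<lambda>x. f x - g x)"
  using assms abs_Dm_diff_le_norm1 abs_Dp_diff_le_norm1 by (auto simp: Dpw_def)

lemma B1_lipschitz:
  assumes "v \<in> B1"
  shows "(norm1 v)-lipschitz_on {-1..1} v"
proof -
  have left: "(norm1 v)-lipschitz_on {-1..0} v"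
    using field_differentiable_bound[of "{-1..0}" v "Dm v" "norm1 v"] assms
    by (intro lipschitz_onI norm1_nonneg)
      (auto simp: dist_real_def has_real_derivative_Dm abs_Dm_le_norm1)
  have right: "(norm1 v)-lipschitz_on {0..1} v"
    using field_differentiable_bound[of "{0..1}" v "Dp v" "norm1 v"] assms
    by (intro lipschitz_onI norm1_nonneg)
      (auto simp: dist_real_def has_real_derivative_Dp abs_Dp_le_norm1)
  from lipschitz_on_concat[OF left right] show ?thesis by simp
qed

section \<open>Piecewise expanding unimodal maps\<close>

lemma mono_on_if_has_real_derivative_nonneg:
  assumes "\<And>x. x \<in> {a..b} \<Longrightarrow> (f has_real_derivative f' x) (at x within {a..b})"
    and "\<And>x. x \<in> {a..b} \<Longrightarrow> 0 \<le> f' x"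
  shows "mono_on {a..b} f"
proof (rule mono_onI)
  fix u w assume uw: "u \<in> {a..b}" "w \<in> {a..b}" "u \<le> w"
  have "(f has_real_derivative f' x) (at x within {u..w})" if "x \<in> {u..w}" for x
    using uw that by (intro DERIV_subset[OF assms(1)]) auto
  then obtain x where "x \<in> {u..w}" "f w - f u = f' x * (w - u)"
    using mvt_very_simple[OF \<open>u \<le> w\<close>, of f "\<lambda>x. (*) (f' x)"]
    by (auto simp: has_field_derivative_def)
  with assms(2) uw show "f u \<le> f w"
    by (metis atLeastAtMost_iff diff_ge_0_iff_ge order_trans zero_le_mult_iff)
qed

lemma U1_B1: "f \<in> U1 \<Longrightarrow> f \<in> B1"
  unfolding U1_def by auto

lemma Inf_Dm_le: "f \<in> B1 \<Longrightarrow> x \<in> {-1..0} \<Longrightarrow> Inf (Dm f ` {-1..0}) \<le> Dm f x"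
  by (intro cInf_lower imageI bounded_imp_bdd_below compact_imp_bounded
      compact_continuous_image continuous_on_Dm) auto

lemma Dp_le_Sup: "f \<in> B1 \<Longrightarrow> x \<in> {0..1} \<Longrightarrow> Dp f x \<le> Sup (Dp f ` {0..1})"
  by (intro cSup_upper imageI bounded_imp_bdd_above compact_imp_bounded
      compact_continuous_image continuous_on_Dp) auto

lemma U1_maps_I:
  assumes f: "f \<in> U1" and x: "x \<in> {-1..1}"
  shows "f x \<in> {-1..1}"
proof -
  have f1: "f \<in> B1" "f (-1) = -1" "f 1 = -1" "f 0 \<le> 1"
    and slopes: "1 < Inf (Dm f ` {-1..0})" "Sup (Dp f ` {0..1}) < -1"
    using f unfolding U1_def by auto
  have "0 \<le> Dm f x" if "x \<in> {-1..0}" for x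
    using Inf_Dm_le[OF f1(1) that] slopes(1) by linarith
  then have left: "mono_on {-1..0} f"
    using has_real_derivative_Dm[OF f1(1)] by (intro mono_on_if_has_real_derivative_nonneg)
  have "0 \<le> - Dp f x" if "x \<in> {0..1}" for x
    using Dp_le_Sup[OF f1(1) that] slopes(2) by linarith
  then have right: "mono_on {0..1} (\<lambda>x. - f x)"
    using has_real_derivative_Dp[OF f1(1)]
    by (intro mono_on_if_has_real_derivative_nonneg) (auto intro: DERIV_minus)
  show ?thesis
  proof (cases "x \<le> 0")
    case True
    then have "f (-1) \<le> f x" "f x \<le> f 0"
      using x by (auto intro!: mono_onD[OF left])
    then show ?thesis using f1 by auto
  next
    case False
    then have "- f 0 \<le> - f x" "- f x \<le> - f 1"
      using x mono_onD[OF right] by auto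
    then show ?thesis using f1 by auto
  qed
qed

lemma U1_orbit_in_I: "f \<in> U1 \<Longrightarrow> (f ^^ n) 0 \<in> {-1..1}"
proof (induction n)
  case (Suc n)
  then show ?case using U1_maps_I[of f "(f ^^ n) 0"] by simp
qed simp

lemma U1_uniformly_expanding:
  assumes "f \<in> U1"
  obtains lam where "1 < lam" "\<forall>y\<in>{-1..1}. lam \<le> \<bar>Dpw f y\<bar>"
proof
  let ?a = "Inf (Dm f ` {-1..0})" and ?b = "Sup (Dp f ` {0..1})"
  show "1 < min ?a (- ?b)"
    using assms unfolding U1_def by auto
  show "\<forall>y\<in>{-1..1}. min ?a (- ?b) \<le> \<bar>Dpw f y\<bar>"
  proof
    fix y :: real assume y: "y \<in> {-1..1}"
    show "min ?a (- ?b) \<le> \<bar>Dpw f y\<bar>"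
    proof (cases "y \<le> 0")
      case True
      then have "?a \<le> Dm f y" using y by (intro Inf_Dm_le[OF U1_B1[OF assms]]) auto
      with True show ?thesis using abs_ge_self[of "Dm f y"] by (auto simp: Dpw_def min_le_iff_disj)
    next
      case False
      then have "Dp f y \<le> ?b" using y by (intro Dp_le_Sup[OF U1_B1[OF assms]]) auto
      with False show ?thesis using abs_ge_minus_self[of "Dp f y"] by (auto simp: Dpw_def min_le_iff_disj)
    qed
  qed
qed

lemma Diter_at_f0: "Diter f i (f 0) = (\<Prod>j<i. Dpw f ((f ^^ Suc j) 0))"
  unfolding Diter_def by (simp add: funpow_swap1)

lemma abs_Diter_ge:
  assumes "f \<in> U1" "0 \<le> lam" "\<forall>y\<in>{-1..1}. lam \<le> \<bar>Dpw f y\<bar>"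
  shows "lam ^ i \<le> \<bar>Diter f i (f 0)\<bar>"
proof -
  have "lam ^ i = (\<Prod>j<i. lam)" by simp
  also have "\<dots> \<le> (\<Prod>j<i. \<bar>Dpw f ((f ^^ Suc j) 0)\<bar>)"
    using assms U1_orbit_in_I[OF assms(1)] by (intro prod_mono) blast
  finally show ?thesis by (simp add: Diter_at_f0 abs_prod)
qed

lemma Diter_nonzero:
  assumes "f \<in> U1"
  shows "Diter f i (f 0) \<noteq> 0"
proof -
  obtain lam where lam: "1 < lam" "\<forall>y\<in>{-1..1}. lam \<le> \<bar>Dpw f y\<bar>"
    using U1_uniformly_expanding[OF assms] by blast
  then have "lam ^ i \<le> \<bar>Diter f i (f 0)\<bar>"
    using abs_Diter_ge[OF assms, of lam i] by simp
  moreover have "0 < lam ^ i" using lam(1) by simp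
  ultimately show ?thesis by auto
qed

definition J_summand :: "(real \<Rightarrow> real) \<Rightarrow> (real \<Rightarrow> real) \<Rightarrow> nat \<Rightarrow> real" where
  "J_summand f v i = v ((f ^^ i) 0) / Diter f i (f 0)"

lemma J_eq_J_summand:
  "J f v = (if periodic_c f then \<Sum>i<(LEAST n. 0 < n \<and> (f ^^ n) 0 = 0). J_summand f v i
            else \<Sum>i. J_summand f v i)"
  by (simp add: J_def J_summand_def Let_def)

lemma bound_on_I_nonneg: "\<forall>y\<in>{-1..1}. \<bar>v y\<bar> \<le> M \<Longrightarrow> 0 \<le> (M::real)" for v :: "real \<Rightarrow> real"
  using abs_ge_zero[of "v 0"] by fastforce

lemma abs_J_summand_le:
  assumes "f \<in> U1" "0 < lam" "\<forall>y\<in>{-1..1}. lam \<le> \<bar>Dpw f y\<bar>" "\<forall>y\<in>{-1..1}. \<bar>v y\<bar> \<le> M"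
  shows "\<bar>J_summand f v i\<bar> \<le> M * inverse lam ^ i"
proof -
  have "\<bar>J_summand f v i\<bar> = \<bar>v ((f ^^ i) 0)\<bar> / \<bar>Diter f i (f 0)\<bar>"
    by (simp add: J_summand_def)
  also have "\<dots> \<le> M / lam ^ i"
    using assms U1_orbit_in_I[OF assms(1)] abs_Diter_ge[OF assms(1) _ assms(3)]
    by (intro frac_le bound_on_I_nonneg) auto
  finally show ?thesis by (simp add: power_inverse divide_inverse)
qed

lemma abs_divide_diff_le:
  fixes a b c d :: real
  shows "\<bar>a / c - b / d\<bar> \<le> \<bar>a - b\<bar> / \<bar>c\<bar> + \<bar>b\<bar> * \<bar>1 / c - 1 / d\<bar>"
proof -
  have "a / c - b / d = (a - b) / c + b * (1 / c - 1 / d)"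
    by (simp add: divide_inverse algebra_simps)
  then show ?thesis
    by (metis abs_divide abs_mult abs_triangle_ineq)
qed

lemma abs_J_summand_diff_le:
  assumes "v \<in> B1" "f \<in> U1" "g \<in> U1"
  shows "\<bar>J_summand f v i - J_summand g v i\<bar> \<le> norm1 v *
    (\<bar>(f ^^ i) 0 - (g ^^ i) 0\<bar> / \<bar>Diter f i (f 0)\<bar> + \<bar>1 / Diter f i (f 0) - 1 / Diter g i (g 0)\<bar>)"
proof -
  let ?y = "(f ^^ i) 0" and ?z = "(g ^^ i) 0" and ?D = "Diter f i (f 0)" and ?E = "Diter g i (g 0)"
  have "\<bar>J_summand f v i - J_summand g v i\<bar> \<le> \<bar>v ?y - v ?z\<bar> / \<bar>?D\<bar> + \<bar>v ?z\<bar> * \<bar>1 / ?D - 1 / ?E\<bar>"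
    unfolding J_summand_def by (rule abs_divide_diff_le)
  also have "\<dots> \<le> norm1 v * \<bar>?y - ?z\<bar> / \<bar>?D\<bar> + norm1 v * \<bar>1 / ?D - 1 / ?E\<bar>"
    using lipschitz_onD[OF B1_lipschitz[OF assms(1)]] abs_le_norm1[OF assms(1)]
      U1_orbit_in_I[OF assms(2)] U1_orbit_in_I[OF assms(3)]
    by (intro add_mono divide_right_mono mult_right_mono) (auto simp: dist_real_def)
  finally show ?thesis by (simp add: algebra_simps)
qed

section \<open>Truncating \<open>J\<close>\<close>

lemma abs_suminf_minus_sum_le:
  fixes t :: "nat \<Rightarrow> real"
  assumes t: "\<forall>i. \<bar>t i\<bar> \<le> M * r ^ i" and r: "0 \<le> r" "r < 1"
  shows "\<bar>suminf t - (\<Sum>i<K. t i)\<bar> \<le> M * r ^ K / (1 - r)"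
proof -
  have "summable (\<lambda>i. M * r ^ i)"
    using r by (intro summable_mult summable_geometric) auto
  then have geom: "summable (\<lambda>n. M * r ^ (n + K))"
    by (subst summable_iff_shift) simp
  have tail: "summable (\<lambda>n. \<bar>t (n + K)\<bar>)"
    using t by (intro summable_comparison_test[OF _ geom]) auto
  then have "summable (\<lambda>n. t (n + K))"
    by (rule summable_rabs_cancel)
  then have "summable t"
    by (metis summable_iff_shift)
  then have "suminf t - (\<Sum>i<K. t i) = (\<Sum>n. t (n + K))"
    using suminf_split_initial_segment[of t K] by simp
  also have "\<bar>\<dots>\<bar> \<le> (\<Sum>n. \<bar>t (n + K)\<bar>)"
    using tail by (rule summable_rabs)
  also have "\<dots> \<le> (\<Sum>n. M * r ^ (n + K))"
    using t tail geom by (intro suminf_le) auto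
  also have "\<dots> = (\<Sum>n. (M * r ^ K) * r ^ n)"
    by (simp add: power_add mult_ac)
  also have "\<dots> = M * r ^ K / (1 - r)"
    using r by (subst suminf_mult) (auto simp: suminf_geometric)
  finally show ?thesis .
qed

lemma abs_sum_minus_sum_le:
  fixes t :: "nat \<Rightarrow> real"
  assumes t: "\<forall>i. \<bar>t i\<bar> \<le> M * r ^ i" and r: "0 \<le> r" "r < 1" and "K \<le> p"
  shows "\<bar>(\<Sum>i<p. t i) - (\<Sum>i<K. t i)\<bar> \<le> M * r ^ K / (1 - r)"
proof -
  define t' where "t' i = (if i < p then t i else 0)" for i
  have "\<bar>t 0\<bar> \<le> M" using t[rule_format, of 0] by simp
  then have "0 \<le> M" using abs_ge_zero[of "t 0"] by linarith
  then have "\<forall>i. \<bar>t' i\<bar> \<le> M * r ^ i" using t r by (simp add: t'_def)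
  then have "\<bar>suminf t' - (\<Sum>i<K. t' i)\<bar> \<le> M * r ^ K / (1 - r)"
    using r by (rule abs_suminf_minus_sum_le)
  moreover have "suminf t' = (\<Sum>i<p. t' i)"
    by (rule suminf_finite) (auto simp: t'_def)
  moreover have "(\<Sum>i<p. t' i) = (\<Sum>i<p. t i)" "(\<Sum>i<K. t' i) = (\<Sum>i<K. t i)"
    using \<open>K \<le> p\<close> by (auto simp: t'_def intro!: sum.cong)
  ultimately show ?thesis by (simp only:)
qed

lemma not_periodic_c_iff: "\<not> periodic_c f \<longleftrightarrow> (\<forall>n>0. (f ^^ n) 0 \<noteq> 0)"
  unfolding periodic_c_def by blast

lemma Least_period_ge:
  assumes "periodic_c f" "\<forall>n\<in>{0<..<K}. (f ^^ n) 0 \<noteq> 0"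
  shows "K \<le> (LEAST n. 0 < n \<and> (f ^^ n) 0 = 0)"
proof (rule ccontr)
  let ?p = "LEAST n. 0 < n \<and> (f ^^ n) 0 = 0"
  have "\<exists>n. 0 < n \<and> (f ^^ n) 0 = 0" using assms(1) unfolding periodic_c_def by auto
  from LeastI_ex[OF this] have p: "0 < ?p" "(f ^^ ?p) 0 = 0" by auto
  assume "\<not> K \<le> ?p"
  with p(1) have "?p \<in> {0<..<K}" by auto
  with p(2) assms(2) show False by blast
qed

lemma abs_J_minus_partial_sum_le:
  assumes "f \<in> U1" "1 < lam" "\<forall>y\<in>{-1..1}. lam \<le> \<bar>Dpw f y\<bar>"
    and "\<forall>n\<in>{0<..<K}. (f ^^ n) 0 \<noteq> 0" and "\<forall>y\<in>{-1..1}. \<bar>v y\<bar> \<le> M"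
  shows "\<bar>J f v - (\<Sum>i<K. J_summand f v i)\<bar> \<le> M * inverse lam ^ K / (1 - inverse lam)"
proof -
  have t: "\<forall>i. \<bar>J_summand f v i\<bar> \<le> M * inverse lam ^ i"
    using abs_J_summand_le assms by auto
  have r: "0 \<le> inverse lam" "inverse lam < 1"
    using assms(2) by (auto simp: inverse_less_1_iff)
  show ?thesis
  proof (cases "periodic_c f")
    case True
    then show ?thesis
      using abs_sum_minus_sum_le[OF t r Least_period_ge[OF True assms(4)]]
      by (simp add: J_eq_J_summand)
  next
    case False
    then show ?thesis
      using abs_suminf_minus_sum_le[OF t r] by (simp add: J_eq_J_summand)
  qed
qed

section \<open>Convergence along the \<open>|\<cdot>|\<^sub>1\<close>-neighbourhood filter of \<open>f\<^sub>0\<close>\<close>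

definition U1_nhds :: "(real \<Rightarrow> real) \<Rightarrow> (real \<Rightarrow> real) filter" where
  "U1_nhds f0 = (INF d\<in>{0<..}. principal {f\<in>U1. norm1 (\<lambda>x. f x - f0 x) < (d::real)})"

lemma eventually_U1_nhds:
  "eventually P (U1_nhds f0) \<longleftrightarrow> (\<exists>d>0. \<forall>f\<in>U1. norm1 (\<lambda>x. f x - f0 x) < d \<longrightarrow> P f)"
proof -
  have "eventually P (U1_nhds f0)
      \<longleftrightarrow> (\<exists>d\<in>{0<..}. eventually P (principal {f\<in>U1. norm1 (\<lambda>x. f x - f0 x) < (d::real)}))"
    unfolding U1_nhds_def
  proof (rule eventually_INF_base)
    fix a b :: real assume "a \<in> {0<..}" "b \<in> {0<..}"
    then show "\<exists>d\<in>{0<..}. principal {f\<in>U1. norm1 (\<lambda>x. f x - f0 x) < d}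
        \<le> inf (principal {f\<in>U1. norm1 (\<lambda>x. f x - f0 x) < a})
              (principal {f\<in>U1. norm1 (\<lambda>x. f x - f0 x) < b})"
      by (intro bexI[of _ "min a b"]) auto
  qed simp
  then show ?thesis by (auto simp: eventually_principal)
qed

lemma tendsto_compose_uniform_approx:
  fixes H :: "'a \<Rightarrow> real \<Rightarrow> real"
  assumes "continuous_on S h" "(g \<longlongrightarrow> l) F" "l \<in> S" "eventually (\<lambda>z. g z \<in> S) F"
    and "eventually (\<lambda>z. \<bar>H z (g z) - h (g z)\<bar> \<le> e z) F" "(e \<longlongrightarrow> 0) F"
  shows "((\<lambda>z. H z (g z)) \<longlongrightarrow> h l) F"
proof -
  have "((\<lambda>z. H z (g z) - h (g z)) \<longlongrightarrow> 0) F"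
    by (rule Lim_null_comparison[OF _ assms(6)]) (use assms(5) in simp)
  from tendsto_add[OF this continuous_on_tendsto_compose[OF assms(1-4)]] show ?thesis
    by simp
qed

context
  fixes f0 :: "real \<Rightarrow> real"
  assumes f0_U1: "f0 \<in> U1"
begin

lemma eventually_U1: "eventually (\<lambda>f. f \<in> U1) (U1_nhds f0)"
  unfolding eventually_U1_nhds by (intro exI[of _ 1]) auto

lemma norm1_diff_tendsto: "((\<lambda>f. norm1 (\<lambda>x. f x - f0 x)) \<longlongrightarrow> 0) (U1_nhds f0)"
proof (rule tendstoI)
  fix e :: real assume "0 < e"
  then show "eventually (\<lambda>f. dist (norm1 (\<lambda>x. f x - f0 x)) 0 < e) (U1_nhds f0)"
    unfolding eventually_U1_nhds
    using norm1_nonneg[OF B1_diff[OF U1_B1 U1_B1[OF f0_U1]]] by (intro exI[of _ e]) auto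
qed

lemma orbit_tendsto: "((\<lambda>f. (f ^^ n) 0) \<longlongrightarrow> (f0 ^^ n) 0) (U1_nhds f0)"
proof (induction n)
  case (Suc n)
  have cont: "continuous_on {-1..1} f0"
    using f0_U1 unfolding U1_def B1_def B0_def by auto
  have bound: "eventually (\<lambda>f. \<bar>f ((f ^^ n) 0) - f0 ((f ^^ n) 0)\<bar> \<le> norm1 (\<lambda>x. f x - f0 x)) (U1_nhds f0)"
    using eventually_U1
    by eventually_elim (rule abs_le_norm1[OF B1_diff[OF U1_B1 U1_B1[OF f0_U1]] U1_orbit_in_I])
  have "((\<lambda>f. f ((f ^^ n) 0)) \<longlongrightarrow> f0 ((f0 ^^ n) 0)) (U1_nhds f0)"
    using tendsto_compose_uniform_approx[where H = "\<lambda>f. f", OF cont Suc.IH U1_orbit_in_I[OF f0_U1]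
        eventually_mono[OF eventually_U1 U1_orbit_in_I] bound norm1_diff_tendsto] .
  then show ?case by simp
qed simp

text \<open>Near \<open>f\<^sub>0\<close> the \<open>j\<close>-th orbit point stays on the same side of the turning point as that
  of \<open>f\<^sub>0\<close>, so only one of the one-sided derivatives is involved.\<close>
lemma Dpw_orbit_tendsto:
  assumes "(f0 ^^ j) 0 \<noteq> 0"
  shows "((\<lambda>f. Dpw f ((f ^^ j) 0)) \<longlongrightarrow> Dpw f0 ((f0 ^^ j) 0)) (U1_nhds f0)"
proof (cases "(f0 ^^ j) 0 < 0")
  case True
  have side: "eventually (\<lambda>f. f \<in> U1 \<and> (f ^^ j) 0 < 0) (U1_nhds f0)"
    using eventually_U1 order_tendstoD(2)[OF orbit_tendsto True] by (rule eventually_conj)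
  then have "eventually (\<lambda>f. \<bar>Dm f ((f ^^ j) 0) - Dm f0 ((f ^^ j) 0)\<bar> \<le> norm1 (\<lambda>x. f x - f0 x)) (U1_nhds f0)"
    by eventually_elim (use U1_orbit_in_I in \<open>auto intro!: abs_Dm_diff_le_norm1 U1_B1 f0_U1\<close>)
  then have "((\<lambda>f. Dm f ((f ^^ j) 0)) \<longlongrightarrow> Dm f0 ((f0 ^^ j) 0)) (U1_nhds f0)"
    using True U1_orbit_in_I[OF f0_U1, of j]
    by (intro tendsto_compose_uniform_approx[where H = Dm, OF continuous_on_Dm[OF U1_B1[OF f0_U1]]
        orbit_tendsto _ eventually_mono[OF side] _ norm1_diff_tendsto])
      (auto dest: U1_orbit_in_I)
  moreover have "eventually (\<lambda>f. Dpw f ((f ^^ j) 0) = Dm f ((f ^^ j) 0)) (U1_nhds f0)"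
    using side by eventually_elim (simp add: Dpw_def)
  ultimately show ?thesis
    using True by (simp add: tendsto_cong Dpw_def)
next
  case False
  then have pos: "0 < (f0 ^^ j) 0" using assms by auto
  have side: "eventually (\<lambda>f. f \<in> U1 \<and> 0 < (f ^^ j) 0) (U1_nhds f0)"
    using eventually_U1 order_tendstoD(1)[OF orbit_tendsto pos] by (rule eventually_conj)
  then have "eventually (\<lambda>f. \<bar>Dp f ((f ^^ j) 0) - Dp f0 ((f ^^ j) 0)\<bar> \<le> norm1 (\<lambda>x. f x - f0 x)) (U1_nhds f0)"
    by eventually_elim (use U1_orbit_in_I in \<open>auto intro!: abs_Dp_diff_le_norm1 U1_B1 f0_U1\<close>)
  then have "((\<lambda>f. Dp f ((f ^^ j) 0)) \<longlongrightarrow> Dp f0 ((f0 ^^ j) 0)) (U1_nhds f0)"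
    using pos U1_orbit_in_I[OF f0_U1, of j]
    by (intro tendsto_compose_uniform_approx[where H = Dp, OF continuous_on_Dp[OF U1_B1[OF f0_U1]]
        orbit_tendsto _ eventually_mono[OF side] _ norm1_diff_tendsto])
      (auto dest: U1_orbit_in_I)
  moreover have "eventually (\<lambda>f. Dpw f ((f ^^ j) 0) = Dp f ((f ^^ j) 0)) (U1_nhds f0)"
    using side by eventually_elim (simp add: Dpw_def)
  ultimately show ?thesis
    using pos by (simp add: tendsto_cong Dpw_def)
qed

lemma Diter_tendsto:
  assumes "\<not> periodic_c f0"
  shows "((\<lambda>f. Diter f i (f 0)) \<longlongrightarrow> Diter f0 i (f0 0)) (U1_nhds f0)"
  unfolding Diter_at_f0
proof (rule tendsto_prod)
  fix j
  have "(f0 ^^ Suc j) 0 \<noteq> 0" using assms unfolding periodic_c_def by blast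
  then show "((\<lambda>f. Dpw f ((f ^^ Suc j) 0)) \<longlongrightarrow> Dpw f0 ((f0 ^^ Suc j) 0)) (U1_nhds f0)"
    by (rule Dpw_orbit_tendsto)
qed

lemma J_summand_tendsto:
  assumes "\<not> periodic_c f0" "v \<in> B0"
  shows "((\<lambda>f. J_summand f v i) \<longlongrightarrow> J_summand f0 v i) (U1_nhds f0)"
  unfolding J_summand_def
proof (rule tendsto_divide[OF _ Diter_tendsto[OF assms(1)] Diter_nonzero[OF f0_U1]])
  show "((\<lambda>f. v ((f ^^ i) 0)) \<longlongrightarrow> v ((f0 ^^ i) 0)) (U1_nhds f0)"
    using assms(2) U1_orbit_in_I[OF f0_U1] eventually_mono[OF eventually_U1 U1_orbit_in_I]
    by (intro continuous_on_tendsto_compose[OF _ orbit_tendsto]) (auto simp: B0_def)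
qed

lemma eventually_uniformly_expanding:
  obtains lam where "1 < lam" "\<forall>y\<in>{-1..1}. lam \<le> \<bar>Dpw f0 y\<bar>"
    "eventually (\<lambda>f. \<forall>y\<in>{-1..1}. lam \<le> \<bar>Dpw f y\<bar>) (U1_nhds f0)"
proof -
  obtain lam0 where lam0: "1 < lam0" "\<forall>y\<in>{-1..1}. lam0 \<le> \<bar>Dpw f0 y\<bar>"
    using U1_uniformly_expanding[OF f0_U1] by blast
  have "eventually (\<lambda>f. \<forall>y\<in>{-1..1}. (lam0 + 1) / 2 \<le> \<bar>Dpw f y\<bar>) (U1_nhds f0)"
    unfolding eventually_U1_nhds
  proof (intro exI[of _ "(lam0 - 1) / 2"] conjI ballI impI)
    fix f y assume "f \<in> U1" "norm1 (\<lambda>x. f x - f0 x) < (lam0 - 1) / 2" "y \<in> {-1..1::real}"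
    then show "(lam0 + 1) / 2 \<le> \<bar>Dpw f y\<bar>"
      using lam0 abs_Dpw_diff_le_norm1[OF U1_B1 U1_B1[OF f0_U1], of f y] by force
  qed (use lam0 in auto)
  with lam0 that[of "(lam0 + 1) / 2"] show thesis by force
qed

lemma eventually_no_early_return:
  assumes "\<not> periodic_c f0"
  shows "eventually (\<lambda>f. \<forall>n\<in>{0<..<K}. (f ^^ n) 0 \<noteq> 0) (U1_nhds f0)"
proof (rule eventually_ball_finite)
  show "\<forall>n\<in>{0<..<K}. eventually (\<lambda>f. (f ^^ n) 0 \<noteq> 0) (U1_nhds f0)"
  proof
    fix n assume "n \<in> {0<..<K}"
    then have "(f0 ^^ n) 0 \<noteq> 0" using assms by (simp add: not_periodic_c_iff)
    then show "eventually (\<lambda>f. (f ^^ n) 0 \<noteq> 0) (U1_nhds f0)"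
      by (rule tendsto_imp_eventually_ne[OF orbit_tendsto])
  qed
qed simp

lemma J_truncation:
  assumes "\<not> periodic_c f0" "0 < \<epsilon>"
  obtains K where "eventually (\<lambda>f. \<forall>v M. (\<forall>y\<in>{-1..1}. \<bar>v y\<bar> \<le> M) \<longrightarrow>
      \<bar>J f v - J f0 v\<bar> \<le> M * \<epsilon> + \<bar>\<Sum>i<K. J_summand f v i - J_summand f0 v i\<bar>) (U1_nhds f0)"
proof -
  obtain lam where lam: "1 < lam" "\<forall>y\<in>{-1..1}. lam \<le> \<bar>Dpw f0 y\<bar>"
    and near: "eventually (\<lambda>f. \<forall>y\<in>{-1..1}. lam \<le> \<bar>Dpw f y\<bar>) (U1_nhds f0)"
    by (rule eventually_uniformly_expanding)
  define r where "r = inverse lam"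
  have r: "0 \<le> r" "r < 1" using lam(1) by (auto simp: r_def inverse_less_1_iff)
  have no_return: "\<forall>n\<in>{0<..<K}. (f0 ^^ n) 0 \<noteq> 0" for K
    using assms(1) by (simp add: not_periodic_c_iff)
  have "(\<lambda>K. 2 * (r ^ K / (1 - r))) \<longlonglongrightarrow> 2 * (0 / (1 - r))"
    using r by (intro tendsto_intros LIMSEQ_power_zero) auto
  then have "eventually (\<lambda>K. 2 * (r ^ K / (1 - r)) < \<epsilon>) sequentially"
    using assms(2) by (intro order_tendstoD(2)) auto
  then obtain K where K: "2 * (r ^ K / (1 - r)) < \<epsilon>"
    unfolding eventually_sequentially by blast
  have "eventually (\<lambda>f. \<forall>v M. (\<forall>y\<in>{-1..1}. \<bar>v y\<bar> \<le> M) \<longrightarrow>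
      \<bar>J f v - J f0 v\<bar> \<le> M * \<epsilon> + \<bar>\<Sum>i<K. J_summand f v i - J_summand f0 v i\<bar>) (U1_nhds f0)"
    using eventually_U1 near eventually_no_early_return[OF assms(1), of K]
  proof eventually_elim
    case (elim f)
    show ?case
    proof (intro allI impI)
      fix v :: "real \<Rightarrow> real" and M :: real assume v: "\<forall>y\<in>{-1..1}. \<bar>v y\<bar> \<le> M"
      have "0 \<le> M" using v by (rule bound_on_I_nonneg)
      have "\<bar>J f v - (\<Sum>i<K. J_summand f v i)\<bar> \<le> M * r ^ K / (1 - r)"
        unfolding r_def using abs_J_minus_partial_sum_le elim lam(1) v by blast
      moreover have "\<bar>J f0 v - (\<Sum>i<K. J_summand f0 v i)\<bar> \<le> M * r ^ K / (1 - r)"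
        unfolding r_def using f0_U1 lam no_return v by (rule abs_J_minus_partial_sum_le)
      moreover have "2 * (M * r ^ K / (1 - r)) \<le> M * \<epsilon>"
      proof -
        have "2 * (M * r ^ K / (1 - r)) = M * (2 * (r ^ K / (1 - r)))" by simp
        also have "\<dots> \<le> M * \<epsilon>" using K \<open>0 \<le> M\<close> by (intro mult_left_mono) auto
        finally show ?thesis .
      qed
      ultimately show "\<bar>J f v - J f0 v\<bar> \<le> M * \<epsilon> + \<bar>\<Sum>i<K. J_summand f v i - J_summand f0 v i\<bar>"
        by (simp add: sum_subtractf)
    qed
  qed
  then show thesis by (rule that)
qed

lemma J_uniformly_close:
  assumes "\<not> periodic_c f0" "0 < \<eta>"
  shows "eventually (\<lambda>f. \<forall>v\<in>B1. \<bar>J f v - J f0 v\<bar> \<le> \<eta> * norm1 v) (U1_nhds f0)"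
proof -
  obtain K where K: "eventually (\<lambda>f. \<forall>v M. (\<forall>y\<in>{-1..1}. \<bar>v y\<bar> \<le> M) \<longrightarrow>
      \<bar>J f v - J f0 v\<bar> \<le> M * (\<eta> / 2) + \<bar>\<Sum>i<K. J_summand f v i - J_summand f0 v i\<bar>) (U1_nhds f0)"
    by (rule J_truncation[OF assms(1), of "\<eta> / 2"]) (use assms(2) in auto)
  define e where "e f i = \<bar>(f ^^ i) 0 - (f0 ^^ i) 0\<bar> / \<bar>Diter f i (f 0)\<bar>
      + \<bar>1 / Diter f i (f 0) - 1 / Diter f0 i (f0 0)\<bar>" for f i
  have "((\<lambda>f. \<Sum>i<K. e f i) \<longlongrightarrow> (\<Sum>i<K. e f0 i)) (U1_nhds f0)"
    unfolding e_def
    by (intro tendsto_intros orbit_tendsto Diter_tendsto assms(1)) (simp_all add: Diter_nonzero f0_U1)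
  then have "eventually (\<lambda>f. (\<Sum>i<K. e f i) < \<eta> / 2) (U1_nhds f0)"
    using assms(2) by (intro order_tendstoD(2)) (auto simp: e_def)
  then show ?thesis
    using K eventually_U1
  proof eventually_elim
    case (elim f)
    show ?case
    proof
      fix v assume v: "v \<in> B1"
      have "\<bar>\<Sum>i<K. J_summand f v i - J_summand f0 v i\<bar> \<le> (\<Sum>i<K. norm1 v * e f i)"
        using abs_J_summand_diff_le[OF v elim(3) f0_U1]
        unfolding e_def by (intro order_trans[OF sum_abs] sum_mono) auto
      also have "\<dots> = norm1 v * (\<Sum>i<K. e f i)"
        by (simp add: sum_distrib_left)
      also have "\<dots> \<le> norm1 v * (\<eta> / 2)"
        using elim(1) norm1_nonneg[OF v] by (intro mult_left_mono) auto
      finally have "\<bar>\<Sum>i<K. J_summand f v i - J_summand f0 v i\<bar> \<le> norm1 v * (\<eta> / 2)" .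
      moreover have "\<bar>J f v - J f0 v\<bar> \<le> norm1 v * (\<eta> / 2) + \<bar>\<Sum>i<K. J_summand f v i - J_summand f0 v i\<bar>"
        using elim(2) abs_le_norm1[OF v] by blast
      ultimately have "\<bar>J f v - J f0 v\<bar> \<le> norm1 v * (\<eta> / 2) + norm1 v * (\<eta> / 2)"
        by linarith
      then show "\<bar>J f v - J f0 v\<bar> \<le> \<eta> * norm1 v"
        by (simp add: field_simps)
    qed
  qed
qed

lemma J_tendsto:
  assumes "\<not> periodic_c f0" "v \<in> B0"
  shows "((\<lambda>f. J f v) \<longlongrightarrow> J f0 v) (U1_nhds f0)"
proof (rule tendstoI)
  fix \<epsilon> :: real assume "0 < \<epsilon>"
  define C where "C = norm0 v + 1"
  have vC: "\<bar>v y\<bar> \<le> C" if "y \<in> {-1..1}" for y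
    using abs_le_norm0[OF assms(2) that] unfolding C_def by linarith
  have "\<bar>v 0\<bar> \<le> norm0 v" using abs_le_norm0[OF assms(2)] by simp
  then have "0 < C" unfolding C_def using abs_ge_zero[of "v 0"] by linarith
  obtain K where K: "eventually (\<lambda>f. \<forall>v M. (\<forall>y\<in>{-1..1}. \<bar>v y\<bar> \<le> M) \<longrightarrow>
      \<bar>J f v - J f0 v\<bar> \<le> M * (\<epsilon> / (2 * C)) + \<bar>\<Sum>i<K. J_summand f v i - J_summand f0 v i\<bar>) (U1_nhds f0)"
    by (rule J_truncation[OF assms(1), of "\<epsilon> / (2 * C)"]) (use \<open>0 < \<epsilon>\<close> \<open>0 < C\<close> in auto)
  have head: "((\<lambda>f. \<Sum>i<K. J_summand f v i - J_summand f0 v i) \<longlongrightarrow> (\<Sum>i<K. J_summand f0 v i - J_summand f0 v i)) (U1_nhds f0)"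
    using J_summand_tendsto[OF assms] by (intro tendsto_intros)
  have "eventually (\<lambda>f. \<bar>\<Sum>i<K. J_summand f v i - J_summand f0 v i\<bar> < \<epsilon> / 2) (U1_nhds f0)"
    using tendstoD[OF head half_gt_zero[OF \<open>0 < \<epsilon>\<close>]] by (simp add: dist_real_def)
  with K show "eventually (\<lambda>f. dist (J f v) (J f0 v) < \<epsilon>) (U1_nhds f0)"
  proof eventually_elim
    case (elim f)
    have "\<bar>J f v - J f0 v\<bar> \<le> C * (\<epsilon> / (2 * C)) + \<bar>\<Sum>i<K. J_summand f v i - J_summand f0 v i\<bar>"
      using elim(1) vC by blast
    moreover have "C * (\<epsilon> / (2 * C)) = \<epsilon> / 2" using \<open>0 < C\<close> by simp
    ultimately show ?case using elim(2) by (simp add: dist_real_def)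
  qed
qed

end

theorem proposition3p2:
  fixes f0 :: "real \<Rightarrow> real"
  assumes "f0 \<in> U1"
    and "\<not> periodic_c f0"
  shows "(\<forall>\<eta>>0. \<exists>\<delta>>0. \<forall>f\<in>U1. norm1 (\<lambda>x. f x - f0 x) < \<delta> \<longrightarrow>
            (\<forall>v\<in>B1. \<bar>J f v - J f0 v\<bar> \<le> \<eta> * norm1 v))
       \<and> (\<forall>v0\<in>B0. \<forall>\<epsilon>>0. \<exists>\<delta>>0. \<forall>f\<in>U1. norm1 (\<lambda>x. f x - f0 x) < \<delta> \<longrightarrow>
            \<bar>J f v0 - J f0 v0\<bar> < \<epsilon>)"
proof (intro conjI allI impI ballI)
  fix \<eta> :: real assume "0 < \<eta>"
  from J_uniformly_close[OF assms this]
  show "\<exists>\<delta>>0. \<forall>f\<in>U1. norm1 (\<lambda>x. f x - f0 x) < \<delta> \<longrightarrow> (\<forall>v\<in>B1. \<bar>J f v - J f0 v\<bar> \<le> \<eta> * norm1 v)"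
    unfolding eventually_U1_nhds .
next
  fix v0 and \<epsilon> :: real assume "v0 \<in> B0" "0 < \<epsilon>"
  from tendstoD[OF J_tendsto[OF assms this(1)] this(2)]
  show "\<exists>\<delta>>0. \<forall>f\<in>U1. norm1 (\<lambda>x. f x - f0 x) < \<delta> \<longrightarrow> \<bar>J f v0 - J f0 v0\<bar> < \<epsilon>"
    unfolding eventually_U1_nhds dist_real_def .
qed

end
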